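(* Let $(Z,d)$ be a distance space, $X\cup Y=Z$ a cover, and $A:=X\cap Y$. Assume $A$ is nonempty and that for every $x\in X\setminus A$, $y\in Y\setminus A$ and $v\in A$ one has $d(x,y)\ge d(x,v)$ and $d(x,y)\ge d(y,v)$. Assume moreover that for every $x\in X\setminus A$ and $y\in Y\setminus A$ one has $d(x,y)\ge\mathrm{diam}(A)$. Then $\mathrm{VR}_r(X)\cup\mathrm{VR}_r(Y)\hookrightarrow\mathrm{VR}_r(Z)$ is a weak equivalence for all $r\in[0,\infty)$.
   Context: A distance on a set $Z$ is a function $d\colon Z\times Z\to[0,\infty]$ with $d(x,y)=d(y,x)$ and $d(x,x)=0$ (no triangle inequality assumed). $\mathrm{diam}(A)$ is the supremum of $d(a,b)$ over $a,b\in A$ (the maximum for finite $A$). For $B\subset Z$ and $r\in[0,\infty)$, $\mathrm{VR}_r(B)$ is the simplicial complex of all finite nonempty $\sigma\subset B$ with $d(x,y)\le r$ for all $x,y\in\sigma$. Homotopical notions refer to geometric realizations. *)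

theory Defs
  imports "HOL-Analysis.Analysis"
begin

definition distance_on :: "'a set \<Rightarrow> ('a \<Rightarrow> 'a \<Rightarrow> ennreal) \<Rightarrow> bool" where
  "distance_on Z d \<longleftrightarrow> (\<forall>x\<in>Z. \<forall>y\<in>Z. d x y = d y x) \<and> (\<forall>x\<in>Z. d x x = 0)"

definition ddiam :: "('a \<Rightarrow> 'a \<Rightarrow> ennreal) \<Rightarrow> 'a set \<Rightarrow> ennreal" where
  "ddiam d A = Sup {d a b | a b. a \<in> A \<and> b \<in> A}"

definition VR :: "('a \<Rightarrow> 'a \<Rightarrow> ennreal) \<Rightarrow> real \<Rightarrow> 'a set \<Rightarrow> 'a set set" where
  "VR d r B = {\<sigma>. finite \<sigma> \<and> \<sigma> \<noteq> {} \<and> \<sigma> \<subseteq> B \<and> (\<forall>x\<in>\<sigma>. \<forall>y\<in>\<sigma>. d x y \<le> ennreal r)}"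

text \<open>Each closed simplex carries the Euclidean topology (subspace of the
  product topology), and the realization carries the coherent (weak) topology.\<close>

definition simplex_pts :: "'a set \<Rightarrow> ('a \<Rightarrow> real) set" where
  "simplex_pts \<sigma> = {\<alpha>. (\<forall>v. 0 \<le> \<alpha> v) \<and> (\<forall>v. v \<notin> \<sigma> \<longrightarrow> \<alpha> v = 0) \<and> sum \<alpha> \<sigma> = 1}"

definition geom_real_set :: "'a set set \<Rightarrow> ('a \<Rightarrow> real) set" where
  "geom_real_set K = (\<Union>\<sigma>\<in>K. simplex_pts \<sigma>)"

definition geom_real_open :: "'a set set \<Rightarrow> ('a \<Rightarrow> real) set \<Rightarrow> bool" where
  "geom_real_open K U \<longleftrightarrow> U \<subseteq> geom_real_set K \<and>
     (\<forall>\<sigma>\<in>K. openin (subtopology (powertop_real UNIV) (simplex_pts \<sigma>)) (U \<inter> simplex_pts \<sigma>))"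

lemma istopology_geom_real_open: "istopology (geom_real_open K)"
  unfolding istopology_def
proof (intro conjI allI impI)
  fix S T assume S: "geom_real_open K S" and T: "geom_real_open K T"
  show "geom_real_open K (S \<inter> T)"
    unfolding geom_real_open_def
  proof (intro conjI ballI)
    show "S \<inter> T \<subseteq> geom_real_set K" using S unfolding geom_real_open_def by blast
    fix \<sigma> assume "\<sigma> \<in> K"
    then have "openin (subtopology (powertop_real UNIV) (simplex_pts \<sigma>)) ((S \<inter> simplex_pts \<sigma>) \<inter> (T \<inter> simplex_pts \<sigma>))"
      using S T unfolding geom_real_open_def by (simp add: openin_Int)
    moreover have "(S \<inter> simplex_pts \<sigma>) \<inter> (T \<inter> simplex_pts \<sigma>) = S \<inter> T \<inter> simplex_pts \<sigma>" by blast
    ultimately show "openin (subtopology (powertop_real UNIV) (simplex_pts \<sigma>)) (S \<inter> T \<inter> simplex_pts \<sigma>)" by simp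
  qed
next
  fix \<K> assume H: "\<forall>U\<in>\<K>. geom_real_open K U"
  show "geom_real_open K (\<Union>\<K>)"
    unfolding geom_real_open_def
  proof (intro conjI ballI)
    show "\<Union>\<K> \<subseteq> geom_real_set K" using H unfolding geom_real_open_def by blast
    fix \<sigma> assume "\<sigma> \<in> K"
    then have "openin (subtopology (powertop_real UNIV) (simplex_pts \<sigma>)) (\<Union>U\<in>\<K>. U \<inter> simplex_pts \<sigma>)"
      using H unfolding geom_real_open_def by (intro openin_clauses) auto
    moreover have "(\<Union>U\<in>\<K>. U \<inter> simplex_pts \<sigma>) = \<Union>\<K> \<inter> simplex_pts \<sigma>" by blast
    ultimately show "openin (subtopology (powertop_real UNIV) (simplex_pts \<sigma>)) (\<Union>\<K> \<inter> simplex_pts \<sigma>)" by simp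
  qed
qed

definition geom_real :: "'a set set \<Rightarrow> ('a \<Rightarrow> real) topology" where
  "geom_real K = topology (geom_real_open K)"

text \<open>Maps
  (cube, boundary) to (X, x) up to homotopy rel boundary are the elements of pi_n(X,x);
  for n = 0 the cube is a point with empty boundary, giving pi_0(X) (path components).\<close>

definition cube :: "nat \<Rightarrow> (nat \<Rightarrow> real) set" where
  "cube n = PiE {..<n} (\<lambda>_. {0..1})"

definition cube_bd :: "nat \<Rightarrow> (nat \<Rightarrow> real) set" where
  "cube_bd n = {t \<in> cube n. \<exists>i<n. t i = 0 \<or> t i = 1}"

definition cube_top :: "nat \<Rightarrow> (nat \<Rightarrow> real) topology" where
  "cube_top n = subtopology (powertop_real {..<n}) (cube n)"

definition sph_maps :: "'b topology \<Rightarrow> nat \<Rightarrow> 'b \<Rightarrow> ((nat \<Rightarrow> real) \<Rightarrow> 'b) set" where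
  "sph_maps X n x = {f. continuous_map (cube_top n) X f \<and> (\<forall>t\<in>cube_bd n. f t = x)}"

definition homotopic_rel_bd :: "'b topology \<Rightarrow> nat \<Rightarrow> 'b \<Rightarrow> ((nat \<Rightarrow> real) \<Rightarrow> 'b) \<Rightarrow> ((nat \<Rightarrow> real) \<Rightarrow> 'b) \<Rightarrow> bool" where
  "homotopic_rel_bd X n x f g \<longleftrightarrow> homotopic_with (\<lambda>h. \<forall>t\<in>cube_bd n. h t = x) (cube_top n) X f g"

definition weak_equivalence :: "'b topology \<Rightarrow> 'c topology \<Rightarrow> ('b \<Rightarrow> 'c) \<Rightarrow> bool" where
  "weak_equivalence X Y f \<longleftrightarrow>
     continuous_map X Y f \<and>
     (\<forall>y\<in>topspace Y. \<exists>x\<in>topspace X. path_component_of Y (f x) y) \<and>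
     (\<forall>n. \<forall>x\<in>topspace X.
        (\<forall>g\<in>sph_maps Y n (f x). \<exists>h\<in>sph_maps X n x. homotopic_rel_bd Y n (f x) (f \<circ> h) g) \<and>
        (\<forall>h1\<in>sph_maps X n x. \<forall>h2\<in>sph_maps X n x.
            homotopic_rel_bd Y n (f x) (f \<circ> h1) (f \<circ> h2) \<longrightarrow> homotopic_rel_bd X n x h1 h2))"

end

theory Submission
  imports Defs
begin

text \<open>Fix a vertex a of X \<inter> Y. A compact subset of |VR_r(Z)| lies in finitely many simplices,
  all with vertices in a finite set W. For a point \<alpha> of such a simplex \<sigma>, let m be the smaller
  of the masses that \<alpha> puts on X - Y and on Y - X. Removing m proportionally from both sides and
  adding 2m at a gives a point of |VR_r(X)| or |VR_r(Y)|, and fixes the points already there.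
  If \<sigma> meets both X - Y and Y - X, the hypotheses on d make \<sigma> \<union> {a} a simplex of VR_r(Z), so
  the straight-line homotopy from \<alpha> stays in |VR_r(Z)|. Deforming every compact set in this way,
  relative to the subcomplex, gives bijections on path components and on all homotopy groups.\<close>

section \<open>Geometric realizations\<close>

definition abstract_simplicial_complex :: "'a set set \<Rightarrow> bool" where
  "abstract_simplicial_complex K \<longleftrightarrow>
     (\<forall>\<sigma>\<in>K. finite \<sigma> \<and> (\<forall>\<tau>. \<tau> \<subseteq> \<sigma> \<and> \<tau> \<noteq> {} \<longrightarrow> \<tau> \<in> K))"

definition bary_support :: "('a \<Rightarrow> real) \<Rightarrow> 'a set" where
  "bary_support \<alpha> = {v. \<alpha> v \<noteq> 0}"

lemma simplex_pts_nonneg: "\<alpha> \<in> simplex_pts \<sigma> \<Longrightarrow> 0 \<le> \<alpha> v"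
  unfolding simplex_pts_def by auto

lemma simplex_pts_outside: "\<alpha> \<in> simplex_pts \<sigma> \<Longrightarrow> v \<notin> \<sigma> \<Longrightarrow> \<alpha> v = 0"
  unfolding simplex_pts_def by auto

lemma simplex_pts_sum: "\<alpha> \<in> simplex_pts \<sigma> \<Longrightarrow> sum \<alpha> \<sigma> = 1"
  unfolding simplex_pts_def by auto

lemma simplex_pts_nonempty: "\<alpha> \<in> simplex_pts \<sigma> \<Longrightarrow> \<sigma> \<noteq> {}"
  using simplex_pts_sum by fastforce

lemma bary_support_subset: "\<alpha> \<in> simplex_pts \<sigma> \<Longrightarrow> bary_support \<alpha> \<subseteq> \<sigma>"
  unfolding simplex_pts_def bary_support_def by auto

lemma simplex_pts_restrict:
  assumes "\<alpha> \<in> simplex_pts \<sigma>" "finite \<sigma>" "\<And>v. v \<in> \<sigma> - \<tau> \<Longrightarrow> \<alpha> v = 0"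
  shows "\<alpha> \<in> simplex_pts (\<sigma> \<inter> \<tau>)"
proof -
  have "sum \<alpha> (\<sigma> \<inter> \<tau>) = sum \<alpha> \<sigma>"
    using assms by (intro sum.mono_neutral_left) auto
  then show ?thesis
    using assms unfolding simplex_pts_def by auto
qed

lemma simplex_pts_bary_support:
  assumes "\<alpha> \<in> simplex_pts \<sigma>" "finite \<sigma>"
  shows "\<alpha> \<in> simplex_pts (bary_support \<alpha>)" "bary_support \<alpha> \<noteq> {}"
proof -
  have "\<alpha> \<in> simplex_pts (\<sigma> \<inter> bary_support \<alpha>)"
    using assms by (intro simplex_pts_restrict) (auto simp: bary_support_def)
  moreover have "\<sigma> \<inter> bary_support \<alpha> = bary_support \<alpha>"
    using bary_support_subset[OF assms(1)] by blast
  ultimately show "\<alpha> \<in> simplex_pts (bary_support \<alpha>)" by simp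
  then show "bary_support \<alpha> \<noteq> {}"
    by (rule simplex_pts_nonempty)
qed

lemma simplex_pts_mono:
  assumes "\<alpha> \<in> simplex_pts \<sigma>" "\<sigma> \<subseteq> \<tau>" "finite \<tau>"
  shows "\<alpha> \<in> simplex_pts \<tau>"
proof -
  have "sum \<alpha> \<tau> = sum \<alpha> \<sigma>"
    using assms by (intro sum.mono_neutral_right) (auto simp: simplex_pts_outside)
  then show ?thesis using assms unfolding simplex_pts_def by auto
qed

lemma simplex_pts_convex:
  assumes "\<alpha> \<in> simplex_pts \<sigma>" "\<beta> \<in> simplex_pts \<sigma>" "0 \<le> t" "t \<le> 1"
  shows "(\<lambda>v. (1 - t) * \<alpha> v + t * \<beta> v) \<in> simplex_pts \<sigma>"
proof -
  have "sum (\<lambda>v. (1 - t) * \<alpha> v + t * \<beta> v) \<sigma> = (1 - t) * sum \<alpha> \<sigma> + t * sum \<beta> \<sigma>"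
    by (simp add: sum.distrib sum_distrib_left)
  also have "\<dots> = 1" using assms by (simp add: simplex_pts_sum)
  finally show ?thesis
    using assms unfolding simplex_pts_def by auto
qed

lemma closedin_simplex_pts:
  assumes "finite \<sigma>"
  shows "closedin (powertop_real UNIV) (simplex_pts \<sigma>)"
proof -
  have preimage: "closedin (powertop_real UNIV) {\<alpha>. f \<alpha> \<in> C}"
    if "continuous_map (powertop_real UNIV) euclideanreal f" "closed C"
    for f :: "('a \<Rightarrow> real) \<Rightarrow> real" and C
    using closedin_continuous_map_preimage[OF that(1), of C] that(2) by simp
  have coord: "continuous_map (powertop_real UNIV) euclideanreal (\<lambda>\<alpha>. \<alpha> v)" for v :: 'a
    by (rule continuous_map_product_projection) simp
  have "simplex_pts \<sigma> = (\<Inter>v. {\<alpha>. \<alpha> v \<in> {0..}})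
      \<inter> (\<Inter>v. {\<alpha>. (if v \<in> \<sigma> then 0 else \<alpha> v) \<in> {0}}) \<inter> {\<alpha>. sum \<alpha> \<sigma> \<in> {1}}"
    unfolding simplex_pts_def by auto
  moreover have "closedin (powertop_real UNIV) \<dots>"
    using assms coord
    by (intro closedin_Int closedin_INT preimage continuous_map_sum) auto
  ultimately show ?thesis by simp
qed

lemma openin_geom_real: "openin (geom_real K) U \<longleftrightarrow> geom_real_open K U"
  by (simp add: geom_real_def istopology_geom_real_open)

lemma simplex_pts_subset_geom_real_set: "\<sigma> \<in> K \<Longrightarrow> simplex_pts \<sigma> \<subseteq> geom_real_set K"
  unfolding geom_real_set_def by blast

lemma topspace_geom_real: "topspace (geom_real K) = geom_real_set K"
proof -
  have "geom_real_set K \<inter> simplex_pts \<sigma> = topspace (subtopology (powertop_real UNIV) (simplex_pts \<sigma>))"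
    if "\<sigma> \<in> K" for \<sigma>
    using simplex_pts_subset_geom_real_set[OF that] by auto
  then have "geom_real_open K (geom_real_set K)"
    unfolding geom_real_open_def by (simp add: openin_subtopology_refl)
  then show ?thesis
    unfolding topspace_def openin_geom_real geom_real_open_def by blast
qed

lemma continuous_map_geom_real_subcomplex:
  assumes "L \<subseteq> K"
  shows "continuous_map (geom_real L) (geom_real K) id"
  unfolding continuous_map
proof (intro conjI allI impI)
  show "id ` topspace (geom_real L) \<subseteq> topspace (geom_real K)"
    using assms by (auto simp: topspace_geom_real geom_real_set_def)
  fix U assume "openin (geom_real K) U"
  then have U: "geom_real_open K U" by (simp add: openin_geom_real)
  have "U \<inter> geom_real_set L \<inter> simplex_pts \<sigma> = U \<inter> simplex_pts \<sigma>" if "\<sigma> \<in> L" for \<sigma>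
    using simplex_pts_subset_geom_real_set[OF that] by blast
  then have "geom_real_open L (U \<inter> geom_real_set L)"
    using U assms unfolding geom_real_open_def by auto
  moreover have "{x \<in> topspace (geom_real L). id x \<in> U} = U \<inter> geom_real_set L"
    by (auto simp: topspace_geom_real)
  ultimately show "openin (geom_real L) {x \<in> topspace (geom_real L). id x \<in> U}"
    by (simp add: openin_geom_real)
qed

lemma continuous_map_geom_real_imp_powertop:
  fixes K :: "'a set set"
  assumes "continuous_map T (geom_real K) f"
  shows "continuous_map T (powertop_real UNIV) f"
  unfolding continuous_map
proof (intro conjI allI impI)
  show "f ` topspace T \<subseteq> topspace (powertop_real UNIV)" by simp
  fix V :: "('a \<Rightarrow> real) set" assume V: "openin (powertop_real UNIV) V"
  have "V \<inter> geom_real_set K \<inter> simplex_pts \<sigma> = V \<inter> simplex_pts \<sigma>" if "\<sigma> \<in> K" for \<sigma>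
    using simplex_pts_subset_geom_real_set[OF that] by blast
  then have "openin (geom_real K) (V \<inter> geom_real_set K)"
    using V by (auto simp: openin_geom_real geom_real_open_def openin_subtopology_Int)
  then have "openin T {x \<in> topspace T. f x \<in> V \<inter> geom_real_set K}"
    using assms unfolding continuous_map by blast
  moreover have "{x \<in> topspace T. f x \<in> V \<inter> geom_real_set K} = {x \<in> topspace T. f x \<in> V}"
    using assms unfolding continuous_map topspace_geom_real by blast
  ultimately show "openin T {x \<in> topspace T. f x \<in> V}" by simp
qed

text \<open>Continuity into the product topology suffices here because a finite union of closed
  simplices carries the subspace topology of the product.\<close>

lemma continuous_map_into_geom_real:
  assumes cont: "continuous_map T (powertop_real UNIV) f" and "finite W"
    and img: "\<And>p. p \<in> topspace T \<Longrightarrow> \<exists>\<sigma>\<in>K. \<sigma> \<subseteq> W \<and> f p \<in> simplex_pts \<sigma>"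
  shows "continuous_map T (geom_real K) f"
  unfolding continuous_map
proof (intro conjI allI impI)
  define F where "F = {\<sigma> \<in> K. \<sigma> \<subseteq> W}"
  define S where "S = (\<Union>\<sigma>\<in>F. simplex_pts \<sigma>)"
  have "F \<subseteq> Pow W" unfolding F_def by blast
  then have F: "finite F"
    using \<open>finite W\<close> by (meson finite_Pow_iff finite_subset)
  have fin: "finite \<sigma>" if "\<sigma> \<in> F" for \<sigma>
    using that \<open>finite W\<close> unfolding F_def by (auto intro: finite_subset)
  have fS: "f p \<in> S" if "p \<in> topspace T" for p
    using img[OF that] unfolding S_def F_def by blast
  show "f ` topspace T \<subseteq> topspace (geom_real K)"
    using fS unfolding S_def F_def topspace_geom_real geom_real_set_def by blast
  fix U assume "openin (geom_real K) U"
  then have U: "geom_real_open K U" by (simp add: openin_geom_real)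
  have "closedin (powertop_real UNIV) (simplex_pts \<sigma> - U)" if "\<sigma> \<in> F" for \<sigma>
  proof -
    obtain V where V: "openin (powertop_real UNIV) V" "U \<inter> simplex_pts \<sigma> = V \<inter> simplex_pts \<sigma>"
      using U \<open>\<sigma> \<in> F\<close> unfolding geom_real_open_def openin_subtopology F_def by blast
    then have "simplex_pts \<sigma> - U = simplex_pts \<sigma> - V" by blast
    then show ?thesis using closedin_simplex_pts[OF fin[OF that]] V(1) by (simp add: closedin_diff)
  qed
  then have "closedin (powertop_real UNIV) (\<Union>\<sigma>\<in>F. simplex_pts \<sigma> - U)"
    using F by (intro closedin_Union) auto
  moreover have "(\<Union>\<sigma>\<in>F. simplex_pts \<sigma> - U) = S - U" unfolding S_def by blast
  ultimately have "closedin (subtopology (powertop_real UNIV) S) (S - U)"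
    by (intro closedin_subset_topspace) auto
  then have "openin (subtopology (powertop_real UNIV) S) (S - (S - U))"
    by (intro openin_diff) (simp_all add: openin_subtopology_refl)
  moreover have "continuous_map T (subtopology (powertop_real UNIV) S) f"
    using cont fS by (auto simp: continuous_map_in_subtopology)
  ultimately have "openin T {x \<in> topspace T. f x \<in> S - (S - U)}"
    unfolding continuous_map by blast
  moreover have "{x \<in> topspace T. f x \<in> S - (S - U)} = {x \<in> topspace T. f x \<in> U}"
    using fS by blast
  ultimately show "openin T {x \<in> topspace T. f x \<in> U}" by simp
qed

lemma continuous_map_linear_homotopy:
  assumes "continuous_map T (powertop_real UNIV) f" "continuous_map T (powertop_real UNIV) g"
  shows "continuous_map (prod_topology (top_of_set {0..1::real}) T) (powertop_real UNIV)
    (\<lambda>(t, p). \<lambda>v. (1 - t) * f p v + t * g p v)"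
  unfolding continuous_map_componentwise_UNIV case_prod_unfold
proof
  fix v
  let ?P = "prod_topology (top_of_set {0..1::real}) T"
  have "continuous_map ?P euclideanreal (\<lambda>z. f (snd z) v)"
    using continuous_map_compose[OF continuous_map_snd
        assms(1)[unfolded continuous_map_componentwise_UNIV, rule_format, of v]]
    by (simp add: o_def)
  moreover have "continuous_map ?P euclideanreal (\<lambda>z. g (snd z) v)"
    using continuous_map_compose[OF continuous_map_snd
        assms(2)[unfolded continuous_map_componentwise_UNIV, rule_format, of v]]
    by (simp add: o_def)
  moreover have "continuous_map ?P euclideanreal fst"
    using continuous_map_fst[of "top_of_set {0..1::real}" T]
    by (simp add: continuous_map_in_subtopology)
  ultimately show "continuous_map ?P euclideanreal (\<lambda>z. (1 - fst z) * f (snd z) v + fst z * g (snd z) v)"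
    by (intro continuous_intros)
qed

lemma finite_if_compactin_and_subsets_closedin:
  assumes "compactin X S" "Q \<subseteq> S" "\<And>P. P \<subseteq> Q \<Longrightarrow> closedin X P"
  shows "finite Q"
proof -
  have "compactin X Q"
    using closed_compactin[OF assms(1,2) assms(3)[OF order_refl]] .
  moreover have "q \<notin> X derived_set_of Q" if "q \<in> Q" for q
  proof
    assume q: "q \<in> X derived_set_of Q"
    have "openin X (topspace X - (Q - {q}))"
      using assms(3)[of "Q - {q}"] by (simp add: closedin_def)
    moreover have "q \<in> topspace X - (Q - {q})"
      using that closedin_subset[OF assms(3)[OF order_refl]] by blast
    ultimately have "\<exists>y\<noteq>q. y \<in> Q \<and> y \<in> topspace X - (Q - {q})"
      using q by (simp only: in_derived_set_of)
    then show False by blast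
  qed
  ultimately show ?thesis
    by (simp add: discrete_compactin_eq_finite disjoint_iff)
qed

lemma closedin_geom_real_if_inj_on_bary_support:
  fixes K :: "'a set set"
  assumes "Q \<subseteq> geom_real_set K" "inj_on bary_support Q" "\<forall>\<sigma>\<in>K. finite \<sigma>"
  shows "closedin (geom_real K) Q"
proof -
  have "openin (subtopology (powertop_real UNIV) (simplex_pts \<sigma>)) ((geom_real_set K - Q) \<inter> simplex_pts \<sigma>)"
    if "\<sigma> \<in> K" for \<sigma>
  proof -
    have "finite (Pow \<sigma>)"
      using assms(3) that by simp
    moreover have "bary_support ` (Q \<inter> simplex_pts \<sigma>) \<subseteq> Pow \<sigma>"
      using bary_support_subset by blast
    ultimately have "finite (bary_support ` (Q \<inter> simplex_pts \<sigma>))"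
      by (rule finite_subset[rotated])
    moreover have "inj_on bary_support (Q \<inter> simplex_pts \<sigma>)"
      using inj_on_subset[OF assms(2)] by blast
    ultimately have "finite (Q \<inter> simplex_pts \<sigma>)"
      by (rule finite_imageD)
    moreover have "t1_space (powertop_real (UNIV :: 'a set))"
      by (intro Hausdorff_imp_t1_space) (simp add: Hausdorff_space_product_topology)
    ultimately have "closedin (powertop_real UNIV) (Q \<inter> simplex_pts \<sigma>)"
      by (simp add: t1_space_closedin_finite)
    then have "openin (powertop_real UNIV) (- (Q \<inter> simplex_pts \<sigma>))"
      by (simp add: closedin_def Compl_eq_Diff_UNIV)
    moreover have "(geom_real_set K - Q) \<inter> simplex_pts \<sigma> = - (Q \<inter> simplex_pts \<sigma>) \<inter> simplex_pts \<sigma>"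
      using simplex_pts_subset_geom_real_set[OF that] by blast
    ultimately show ?thesis
      by (auto simp: openin_subtopology)
  qed
  then show ?thesis
    using assms(1) by (simp add: closedin_def topspace_geom_real openin_geom_real geom_real_open_def)
qed

text \<open>A set of points with pairwise distinct supports is closed, and so are all its subsets;
  inside a compact set it must therefore be finite.\<close>

lemma compactin_geom_real_finite_vertices:
  assumes S: "compactin (geom_real K) S" and K: "abstract_simplicial_complex K"
  obtains W where "finite W" "\<And>\<alpha>. \<alpha> \<in> S \<Longrightarrow> \<exists>\<sigma>\<in>K. \<sigma> \<subseteq> W \<and> \<alpha> \<in> simplex_pts \<sigma>"
proof -
  have SK: "S \<subseteq> geom_real_set K"
    using compactin_subset_topspace[OF S] by (simp add: topspace_geom_real)
  have support: "bary_support \<alpha> \<in> K \<and> \<alpha> \<in> simplex_pts (bary_support \<alpha>)" if "\<alpha> \<in> S" for \<alpha>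
  proof -
    obtain \<sigma> where \<sigma>: "\<sigma> \<in> K" "\<alpha> \<in> simplex_pts \<sigma>"
      using SK \<open>\<alpha> \<in> S\<close> unfolding geom_real_set_def by blast
    then have "finite \<sigma>" "\<forall>\<tau>. \<tau> \<subseteq> \<sigma> \<and> \<tau> \<noteq> {} \<longrightarrow> \<tau> \<in> K"
      using K unfolding abstract_simplicial_complex_def by auto
    then show ?thesis
      using simplex_pts_bary_support[OF \<sigma>(2)] bary_support_subset[OF \<sigma>(2)] by blast
  qed
  have "\<exists>Q\<subseteq>S. inj_on bary_support Q \<and> bary_support ` S = bary_support ` Q"
    using subset_image_inj[of "bary_support ` S" bary_support S] by simp
  then obtain Q where Q: "Q \<subseteq> S" "inj_on bary_support Q" "bary_support ` S = bary_support ` Q"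
    by blast
  have "closedin (geom_real K) P" if "P \<subseteq> Q" for P
    using that Q(1,2) SK K unfolding abstract_simplicial_complex_def
    by (intro closedin_geom_real_if_inj_on_bary_support) (auto intro: inj_on_subset)
  then have "finite Q"
    using finite_if_compactin_and_subsets_closedin[OF S Q(1)] by blast
  moreover have "finite (bary_support \<alpha>)" if "\<alpha> \<in> S" for \<alpha>
    using support[OF that] K unfolding abstract_simplicial_complex_def by blast
  ultimately have "finite (\<Union>(bary_support ` S))"
    using Q(1) by (auto simp: Q(3))
  then show ?thesis
    using that support by blast
qed

section \<open>Deforming compact sets into a subspace\<close>

lemma compact_space_cube_top: "compact_space (cube_top n)"
  unfolding cube_top_def cube_def
  by (intro compact_space_subtopology) (simp add: compactin_PiE)

lemma topspace_cube_top: "topspace (cube_top n) = cube n"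
  unfolding cube_top_def cube_def by auto

lemma homotopic_rel_bd_iff:
  "homotopic_rel_bd X n x f g \<longleftrightarrow>
     (\<exists>H. continuous_map (prod_topology (top_of_set {0..1::real}) (cube_top n)) X H \<and>
        (\<forall>q\<in>cube n. H (0, q) = f q) \<and> (\<forall>q\<in>cube n. H (1, q) = g q) \<and>
        (\<forall>t\<in>{0..1}. \<forall>q\<in>cube_bd n. H (t, q) = x))"
proof -
  have "cube_bd n \<subseteq> topspace (cube_top n)"
    by (auto simp: topspace_cube_top cube_bd_def)
  then have "homotopic_with (\<lambda>h. \<forall>q\<in>cube_bd n. h q = x) (cube_top n) X f g \<longleftrightarrow>
     (\<exists>H. continuous_map (prod_topology (top_of_set {0..1::real}) (cube_top n)) X H \<and>
        (\<forall>q\<in>topspace (cube_top n). H (0, q) = f q) \<and> (\<forall>q\<in>topspace (cube_top n). H (1, q) = g q) \<and>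
        (\<forall>t\<in>{0..1}. \<forall>q\<in>cube_bd n. H (t, q) = x))"
    by (intro homotopic_with) (auto simp: subset_iff)
  then show ?thesis
    by (simp add: homotopic_rel_bd_def topspace_cube_top)
qed

lemma continuous_map_homotopy_compose:
  assumes "continuous_map (prod_topology (top_of_set {0..1::real}) (subtopology X C)) Y D"
    and "continuous_map T X g" "g ` topspace T \<subseteq> C"
  shows "continuous_map (prod_topology (top_of_set {0..1::real}) T) Y (\<lambda>(t, p). D (t, g p))"
proof -
  have "continuous_map (prod_topology (top_of_set {0..1::real}) T)
      (prod_topology (top_of_set {0..1::real}) (subtopology X C)) (\<lambda>(t, p). (id t, g p))"
    using assms(2,3)
    by (simp add: continuous_map_prod_top continuous_map_in_subtopology image_subset_iff_funcset)
  from continuous_map_compose[OF this assms(1)] show ?thesis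
    by (simp add: o_def case_prod_unfold)
qed

text \<open>Spheres and the homotopies between them have compact images, so a deformation of each
  compact set, fixing what already lies in S, is all that the weak equivalence needs.\<close>

definition deforms_compacta_into :: "'a topology \<Rightarrow> 'a topology \<Rightarrow> bool" where
  "deforms_compacta_into S X \<longleftrightarrow> (\<forall>C. compactin X C \<longrightarrow>
     (\<exists>D. continuous_map (prod_topology (top_of_set {0..1::real}) (subtopology X C)) X D \<and>
        (\<forall>z\<in>C. D (0, z) = z) \<and> continuous_map (subtopology X C) S (\<lambda>z. D (1, z)) \<and>
        (\<forall>t\<in>{0..1}. \<forall>z\<in>C \<inter> topspace S. D (t, z) = z)))"

lemma deforms_compacta_path_component:
  assumes S: "deforms_compacta_into S X" and y: "y \<in> topspace X"
  shows "\<exists>x\<in>topspace S. path_component_of X x y"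
proof -
  have C: "compactin X {y}"
    using y by simp
  obtain D where D: "continuous_map (prod_topology (top_of_set {0..1::real}) (subtopology X {y})) X D"
      "\<forall>z\<in>{y}. D (0, z) = z" "continuous_map (subtopology X {y}) S (\<lambda>z. D (1, z))"
    using S[unfolded deforms_compacta_into_def, rule_format, OF C] by blast
  have path2: "continuous_map (prod_topology (top_of_set {0..1::real}) (top_of_set {0..1::real})) X
      (\<lambda>(t, s). D (t, y))"
    using continuous_map_homotopy_compose[OF D(1), of "top_of_set {0..1}" "\<lambda>_. y"] y
    by (simp add: image_subset_iff)
  have diagonal: "continuous_map (top_of_set {0..1::real})
      (prod_topology (top_of_set {0..1::real}) (top_of_set {0..1::real})) (\<lambda>t. (t, t))"
    by (intro continuous_map_pairedI continuous_map_id[unfolded id_def])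
  have "continuous_map (top_of_set {0..1::real}) X (\<lambda>t. D (t, y))"
    using continuous_map_compose[OF diagonal path2] by (simp add: o_def)
  then have "path_component_of X (D (1, y)) y"
    using D(2) path_component_of_sym unfolding path_component_of_def pathin_def by fastforce
  moreover have "D (1, y) \<in> topspace S"
    using continuous_map_image_subset_topspace[OF D(3)] y by auto
  ultimately show ?thesis by blast
qed

lemma deforms_compacta_sph_maps_surj:
  assumes S: "deforms_compacta_into S X" and x: "x \<in> topspace S" and "g \<in> sph_maps X n x"
  shows "\<exists>h\<in>sph_maps S n x. homotopic_rel_bd X n x h g"
proof -
  have g: "continuous_map (cube_top n) X g" and g_bd: "\<forall>q\<in>cube_bd n. g q = x"
    using \<open>g \<in> sph_maps X n x\<close> unfolding sph_maps_def by auto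
  let ?C = "g ` topspace (cube_top n)"
  have C: "compactin X ?C"
    using image_compactin[OF compact_space_cube_top[unfolded compact_space_def] g] .
  obtain D where D: "continuous_map (prod_topology (top_of_set {0..1::real}) (subtopology X ?C)) X D"
      "\<forall>z\<in>?C. D (0, z) = z" "continuous_map (subtopology X ?C) S (\<lambda>z. D (1, z))"
      "\<forall>t\<in>{0..1}. \<forall>z\<in>?C \<inter> topspace S. D (t, z) = z"
    using S[unfolded deforms_compacta_into_def, rule_format, OF C] by blast
  have x_fixed: "D (t, x) = x" if "t \<in> {0..1}" "q \<in> cube_bd n" for t q
  proof -
    have "q \<in> topspace (cube_top n)"
      using that(2) by (simp add: topspace_cube_top cube_bd_def)
    then have "x \<in> ?C"
      using g_bd that(2) by (metis image_eqI)
    then show ?thesis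
      using D(4) x that(1) by blast
  qed
  have "continuous_map (cube_top n) (subtopology X ?C) g"
    using g by (simp add: continuous_map_in_subtopology)
  from continuous_map_compose[OF this D(3)]
  have "continuous_map (cube_top n) S (\<lambda>q. D (1, g q))"
    by (simp add: o_def)
  then have "(\<lambda>q. D (1, g q)) \<in> sph_maps S n x"
    unfolding sph_maps_def using x_fixed g_bd by auto
  moreover have "homotopic_rel_bd X n x g (\<lambda>q. D (1, g q))"
    unfolding homotopic_rel_bd_iff
    using continuous_map_homotopy_compose[OF D(1) g] D(2) x_fixed g_bd
    by (intro exI[of _ "\<lambda>(t, q). D (t, g q)"]) (auto simp: topspace_cube_top)
  then have "homotopic_rel_bd X n x (\<lambda>q. D (1, g q)) g"
    unfolding homotopic_rel_bd_def by (rule homotopic_with_symD)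
  ultimately show ?thesis by blast
qed

lemma deforms_compacta_sph_maps_inj:
  assumes S: "deforms_compacta_into S X" and x: "x \<in> topspace S"
    and h1: "h1 \<in> sph_maps S n x" and h2: "h2 \<in> sph_maps S n x"
    and "homotopic_rel_bd X n x h1 h2"
  shows "homotopic_rel_bd S n x h1 h2"
proof -
  obtain G where G: "continuous_map (prod_topology (top_of_set {0..1::real}) (cube_top n)) X G"
      "\<forall>q\<in>cube n. G (0, q) = h1 q" "\<forall>q\<in>cube n. G (1, q) = h2 q"
      "\<forall>t\<in>{0..1}. \<forall>q\<in>cube_bd n. G (t, q) = x"
    using \<open>homotopic_rel_bd X n x h1 h2\<close> unfolding homotopic_rel_bd_iff by auto
  let ?T = "prod_topology (top_of_set {0..1::real}) (cube_top n)"
  let ?C = "G ` topspace ?T"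
  have "compact_space ?T"
    by (simp add: compact_space_prod_topology compact_space_cube_top compact_space_subtopology)
  then have C: "compactin X ?C"
    using image_compactin[OF _ G(1)] unfolding compact_space_def by blast
  obtain D where D: "continuous_map (subtopology X ?C) S (\<lambda>z. D (1, z))"
      "\<forall>t\<in>{0..1::real}. \<forall>z\<in>?C \<inter> topspace S. D (t, z) = z"
    using S[unfolded deforms_compacta_into_def, rule_format, OF C] by blast
  have h_in_S: "h q \<in> topspace S" if "h \<in> sph_maps S n x" "q \<in> cube n" for h q
    using that continuous_map_image_subset_topspace[of "cube_top n" S h]
    unfolding sph_maps_def by (auto simp: topspace_cube_top)
  have fixed: "D (1, G (t, q)) = G (t, q)"
    if "t \<in> {0..1}" "q \<in> cube n" "G (t, q) \<in> topspace S" for t q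
    using D(2) that by (auto simp: topspace_prod_topology topspace_cube_top)
  have "continuous_map ?T (subtopology X ?C) G"
    using G(1) by (simp add: continuous_map_in_subtopology)
  from continuous_map_compose[OF this D(1)]
  have "continuous_map ?T S (\<lambda>p. D (1, G p))"
    by (simp add: o_def)
  then show ?thesis
    unfolding homotopic_rel_bd_iff
  proof (intro exI[of _ "\<lambda>p. D (1, G p)"] conjI ballI)
    fix q assume "q \<in> cube n"
    then show "D (1, G (0, q)) = h1 q" "D (1, G (1, q)) = h2 q"
      using fixed[of 0 q] fixed[of 1 q] G(2,3) h_in_S[OF h1] h_in_S[OF h2] by auto
  next
    fix t q assume "t \<in> {0..1::real}" "q \<in> cube_bd n"
    then show "D (1, G (t, q)) = x"
      using fixed[of t q] G(4) x by (auto simp: cube_bd_def)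
  qed
qed

lemma weak_equivalence_id_if_deforms_compacta:
  assumes "continuous_map S X id" and S: "deforms_compacta_into S X"
  shows "weak_equivalence S X id"
  unfolding weak_equivalence_def
proof (intro conjI ballI allI impI)
  fix y assume "y \<in> topspace X"
  then show "\<exists>x\<in>topspace S. path_component_of X (id x) y"
    using deforms_compacta_path_component[OF S] by simp
next
  fix n x g assume "x \<in> topspace S" "g \<in> sph_maps X n (id x)"
  then show "\<exists>h\<in>sph_maps S n x. homotopic_rel_bd X n (id x) (id \<circ> h) g"
    using deforms_compacta_sph_maps_surj[OF S] by simp
next
  fix n x h1 h2 assume "x \<in> topspace S" "h1 \<in> sph_maps S n x" "h2 \<in> sph_maps S n x"
    "homotopic_rel_bd X n (id x) (id \<circ> h1) (id \<circ> h2)"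
  then show "homotopic_rel_bd S n x h1 h2"
    using deforms_compacta_sph_maps_inj[OF S] by simp
qed (fact assms(1))

section \<open>Pushing mass onto a vertex of the overlap\<close>

lemma continuous_on_mult_ratio:
  "continuous_on {(a, s, m). 0 \<le> a \<and> a \<le> s \<and> 0 \<le> m \<and> m \<le> (s::real)} (\<lambda>(a, s, m). a * (m / s) :: real)"
  unfolding continuous_on_eq_continuous_within
proof
  let ?D = "{(a, s, m). 0 \<le> a \<and> a \<le> s \<and> 0 \<le> m \<and> m \<le> (s::real)}"
  let ?f = "\<lambda>(a, s, m). a * (m / s) :: real"
  fix x assume "x \<in> ?D"
  then obtain a s m where x: "x = (a, s, m)" "0 \<le> a" "a \<le> s" "0 \<le> m" "m \<le> s"
    by auto
  show "continuous (at x within ?D) ?f"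
  proof (cases "s = 0")
    case False
    then have "continuous (at x) (\<lambda>y. fst y * (snd (snd y) / fst (snd y)))"
      using x by (intro continuous_intros) auto
    then show ?thesis
      by (simp add: case_prod_unfold continuous_at_imp_continuous_within)
  next
    case True
    text \<open>At a point with s = 0 the value is 0, and near it |a m / s| \<le> a \<rightarrow> 0.\<close>
    have "norm (?f y) \<le> fst y" if "y \<in> ?D" for y
    proof -
      obtain a' s' m' where y: "y = (a', s', m')" "0 \<le> a'" "a' \<le> s'" "0 \<le> m'" "m' \<le> s'"
        using \<open>y \<in> ?D\<close> by (cases y) auto
      then have "m' / s' \<le> 1" by (cases "s' = 0") (auto simp: divide_le_eq)
      then show ?thesis
        using y mult_left_le[of "m' / s'" a'] by (simp add: abs_mult)
    qed
    then have "eventually (\<lambda>y. norm (?f y) \<le> fst y) (at x within ?D)"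
      by (auto simp: eventually_at_filter)
    moreover have "(fst \<longlongrightarrow> 0) (at x within ?D)"
      using True x by (auto intro!: tendsto_eq_intros)
    ultimately have "(?f \<longlongrightarrow> 0) (at x within ?D)"
      by (rule Lim_null_comparison)
    then show ?thesis
      using True x by (simp add: continuous_within)
  qed
qed

lemma continuous_map_mult_ratio:
  fixes a s m :: "'b \<Rightarrow> real"
  assumes "continuous_map T euclideanreal a" "continuous_map T euclideanreal s"
    "continuous_map T euclideanreal m"
    and "\<And>p. p \<in> topspace T \<Longrightarrow> 0 \<le> a p \<and> a p \<le> s p \<and> 0 \<le> m p \<and> m p \<le> s p"
  shows "continuous_map T euclideanreal (\<lambda>p. a p * (m p / s p))"
proof -
  let ?D = "{(a, s, m). 0 \<le> a \<and> a \<le> s \<and> 0 \<le> m \<and> m \<le> (s::real)}"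
  have "continuous_map T (prod_topology euclideanreal (prod_topology euclideanreal euclideanreal))
      (\<lambda>p. (a p, s p, m p))"
    using assms(1-3) by (intro continuous_map_pairedI)
  then have "continuous_map T euclidean (\<lambda>p. (a p, s p, m p))"
    by simp
  then have into_D: "continuous_map T (top_of_set ?D) (\<lambda>p. (a p, s p, m p))"
    using assms(4) by (auto simp: continuous_map_in_subtopology)
  have on_D: "continuous_map (top_of_set ?D) euclideanreal (\<lambda>(a, s, m). a * (m / s))"
    using continuous_on_mult_ratio by simp
  show ?thesis
    using continuous_map_compose[OF into_D on_D] by (simp add: o_def)
qed

definition mass :: "'a set \<Rightarrow> ('a \<Rightarrow> real) \<Rightarrow> 'a set \<Rightarrow> real" where
  "mass W \<alpha> P = sum \<alpha> (W \<inter> P)"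

definition crossing_mass :: "'a set \<Rightarrow> 'a set \<Rightarrow> 'a set \<Rightarrow> ('a \<Rightarrow> real) \<Rightarrow> real" where
  "crossing_mass W X Y \<alpha> = min (mass W \<alpha> (X - Y)) (mass W \<alpha> (Y - X))"

definition drain :: "'a set \<Rightarrow> real \<Rightarrow> ('a \<Rightarrow> real) \<Rightarrow> 'a set \<Rightarrow> 'a \<Rightarrow> real" where
  "drain W m \<alpha> P v = (if v \<in> P then \<alpha> v * (m / mass W \<alpha> P) else 0)"

text \<open>The vertex set W only serves to make the masses finite sums, hence continuous.\<close>

definition push_to :: "'a \<Rightarrow> 'a set \<Rightarrow> 'a set \<Rightarrow> 'a set \<Rightarrow> ('a \<Rightarrow> real) \<Rightarrow> 'a \<Rightarrow> real" where
  "push_to a W X Y \<alpha> v = \<alpha> v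
      - drain W (crossing_mass W X Y \<alpha>) \<alpha> (X - Y) v
      - drain W (crossing_mass W X Y \<alpha>) \<alpha> (Y - X) v
      + (if v = a then 2 * crossing_mass W X Y \<alpha> else 0)"

lemma drain_outside [simp]: "v \<notin> P \<Longrightarrow> drain W m \<alpha> P v = 0"
  by (simp add: drain_def)

lemma mass_nonneg: "\<alpha> \<in> simplex_pts \<sigma> \<Longrightarrow> 0 \<le> mass W \<alpha> P"
  unfolding mass_def by (intro sum_nonneg) (rule simplex_pts_nonneg)

lemma coord_le_mass:
  assumes "\<alpha> \<in> simplex_pts \<sigma>" "\<sigma> \<subseteq> W" "finite W" "v \<in> P"
  shows "\<alpha> v \<le> mass W \<alpha> P"
proof (cases "v \<in> W")
  case True
  then show ?thesis
    unfolding mass_def using assms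
    by (intro member_le_sum) (auto simp: simplex_pts_nonneg[OF assms(1)])
next
  case False
  then have "\<alpha> v = 0"
    using assms(2) simplex_pts_outside[OF assms(1)] by blast
  then show ?thesis using mass_nonneg[OF assms(1)] by simp
qed

lemma mass_eq_sum:
  assumes "\<alpha> \<in> simplex_pts \<sigma>" "\<sigma> \<subseteq> W" "\<sigma> \<subseteq> S" "finite W" "finite S"
  shows "mass W \<alpha> P = sum \<alpha> (S \<inter> P)"
proof -
  have support: "\<alpha> v = 0" if "v \<notin> \<sigma>" for v
    using assms(1) that by (rule simplex_pts_outside)
  have "mass W \<alpha> P = sum \<alpha> (\<sigma> \<inter> P)"
    unfolding mass_def using assms support
    by (intro sum.mono_neutral_right) auto
  also have "\<dots> = sum \<alpha> (S \<inter> P)"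
    using assms support by (intro sum.mono_neutral_left) auto
  finally show ?thesis .
qed

lemma crossing_mass_bounds:
  assumes "\<alpha> \<in> simplex_pts \<sigma>"
  shows "0 \<le> crossing_mass W X Y \<alpha>" "crossing_mass W X Y \<alpha> \<le> mass W \<alpha> (X - Y)"
    "crossing_mass W X Y \<alpha> \<le> mass W \<alpha> (Y - X)"
  using mass_nonneg[OF assms] unfolding crossing_mass_def by auto

lemma crossing_mass_eq_0:
  assumes "\<alpha> \<in> simplex_pts \<sigma>" "\<sigma> \<subseteq> X \<or> \<sigma> \<subseteq> Y"
  shows "crossing_mass W X Y \<alpha> = 0"
proof -
  have "mass W \<alpha> (Y - X) = 0 \<or> mass W \<alpha> (X - Y) = 0"
    using assms simplex_pts_outside[OF assms(1)] unfolding mass_def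
    by (auto intro!: sum.neutral)
  then show ?thesis
    using crossing_mass_bounds[OF assms(1), of W X Y] by (auto simp: crossing_mass_def)
qed

lemma drain_bounds:
  assumes "\<alpha> \<in> simplex_pts \<sigma>" "\<sigma> \<subseteq> W" "finite W" "0 \<le> m" "m \<le> mass W \<alpha> P"
  shows "0 \<le> drain W m \<alpha> P v" "drain W m \<alpha> P v \<le> \<alpha> v"
proof -
  have ratio: "0 \<le> m / mass W \<alpha> P" "m / mass W \<alpha> P \<le> 1"
    using assms(4,5) by (auto simp: divide_le_eq)
  have "0 \<le> \<alpha> v * (m / mass W \<alpha> P)" "\<alpha> v * (m / mass W \<alpha> P) \<le> \<alpha> v"
    using mult_nonneg_nonneg[OF _ ratio(1)] mult_left_le[OF ratio(2)]
      simplex_pts_nonneg[OF assms(1), of v] by blast+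
  then show "0 \<le> drain W m \<alpha> P v" "drain W m \<alpha> P v \<le> \<alpha> v"
    using simplex_pts_nonneg[OF assms(1), of v] unfolding drain_def by auto
qed

lemma sum_drain:
  assumes "\<alpha> \<in> simplex_pts \<sigma>" "\<sigma> \<subseteq> W" "\<sigma> \<subseteq> S" "finite W" "finite S"
    and "0 \<le> m" "m \<le> mass W \<alpha> P"
  shows "sum (drain W m \<alpha> P) S = m"
proof -
  have "sum (drain W m \<alpha> P) S = (\<Sum>v\<in>S \<inter> P. \<alpha> v * (m / mass W \<alpha> P))"
    unfolding drain_def by (simp only: sum.inter_restrict[OF assms(5)])
  also have "\<dots> = sum \<alpha> (S \<inter> P) * (m / mass W \<alpha> P)"
    by (rule sum_distrib_right[symmetric])
  also have "\<dots> = mass W \<alpha> P * (m / mass W \<alpha> P)"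
    using mass_eq_sum[OF assms(1-5)] by simp
  also have "\<dots> = m"
    using assms(6,7) by (cases "mass W \<alpha> P = 0") auto
  finally show ?thesis .
qed

lemma push_to_nonneg:
  assumes \<alpha>: "\<alpha> \<in> simplex_pts \<sigma>" "\<sigma> \<subseteq> W" "finite W" and a: "a \<in> X \<inter> Y"
  shows "0 \<le> push_to a W X Y \<alpha> v"
proof -
  note m = crossing_mass_bounds[OF \<alpha>(1), of W X Y]
  consider "v \<in> X - Y" | "v \<in> Y - X" | "v \<notin> X - Y" "v \<notin> Y - X" by blast
  then show ?thesis
  proof cases
    case 1
    then have "v \<noteq> a" using a by blast
    with 1 show ?thesis
      using drain_bounds[OF \<alpha> m(1,2), of v] by (simp add: push_to_def)
  next
    case 2
    then have "v \<noteq> a" using a by blast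
    with 2 show ?thesis
      using drain_bounds[OF \<alpha> m(1,3), of v] by (simp add: push_to_def)
  next
    case 3
    then show ?thesis
      using simplex_pts_nonneg[OF \<alpha>(1), of v] m(1) by (simp add: push_to_def)
  qed
qed

lemma push_to_in_simplex:
  assumes \<alpha>: "\<alpha> \<in> simplex_pts \<sigma>" "\<sigma> \<subseteq> W" "finite W" and a: "a \<in> X \<inter> Y"
  shows "push_to a W X Y \<alpha> \<in> simplex_pts (insert a \<sigma>)"
proof -
  let ?m = "crossing_mass W X Y \<alpha>"
  let ?S = "insert a \<sigma>"
  have S: "finite ?S" "\<sigma> \<subseteq> ?S"
    using \<alpha> finite_subset by auto
  note m = crossing_mass_bounds[OF \<alpha>(1), of W X Y]
  have "0 \<le> push_to a W X Y \<alpha> v" for v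
    using push_to_nonneg[OF \<alpha> a] .
  moreover have "push_to a W X Y \<alpha> v = 0" if "v \<notin> ?S" for v
    using that simplex_pts_outside[OF \<alpha>(1), of v] by (simp add: push_to_def drain_def)
  moreover have "sum (push_to a W X Y \<alpha>) ?S = 1"
  proof -
    have "sum (push_to a W X Y \<alpha>) ?S = sum \<alpha> ?S
        - sum (drain W ?m \<alpha> (X - Y)) ?S - sum (drain W ?m \<alpha> (Y - X)) ?S
        + sum (\<lambda>v. if v = a then 2 * ?m else 0) ?S"
      unfolding push_to_def by (simp add: sum.distrib sum_subtractf)
    also have "\<dots> = 1 - ?m - ?m + 2 * ?m"
      using simplex_pts_sum[OF simplex_pts_mono[OF \<alpha>(1) S(2,1)]] S(1)
        sum_drain[OF \<alpha>(1,2) S(2) \<alpha>(3) S(1) m(1,2)] sum_drain[OF \<alpha>(1,2) S(2) \<alpha>(3) S(1) m(1,3)]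
      by (simp add: sum.delta)
    finally show ?thesis by simp
  qed
  ultimately show ?thesis
    unfolding simplex_pts_def by blast
qed

lemma push_to_vanishes_on_a_side:
  assumes \<alpha>: "\<alpha> \<in> simplex_pts \<sigma>" "\<sigma> \<subseteq> W" "finite W" and a: "a \<in> X \<inter> Y"
  shows "(\<forall>v\<in>X - Y. push_to a W X Y \<alpha> v = 0) \<or> (\<forall>v\<in>Y - X. push_to a W X Y \<alpha> v = 0)"
proof -
  have drained: "\<alpha> v - drain W (mass W \<alpha> P) \<alpha> P v = 0" if "v \<in> P" for v P
  proof (cases "mass W \<alpha> P = 0")
    case True
    then have "\<alpha> v = 0"
      using coord_le_mass[OF \<alpha> that] simplex_pts_nonneg[OF \<alpha>(1), of v] by simp
    then show ?thesis by (simp add: drain_def)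
  qed (simp add: drain_def that)
  show ?thesis
  proof (cases "mass W \<alpha> (X - Y) \<le> mass W \<alpha> (Y - X)")
    case True
    then have "crossing_mass W X Y \<alpha> = mass W \<alpha> (X - Y)"
      by (simp add: crossing_mass_def)
    then have "\<forall>v\<in>X - Y. push_to a W X Y \<alpha> v = 0"
      using drained[of _ "X - Y"] a by (auto simp: push_to_def)
    then show ?thesis ..
  next
    case False
    then have "crossing_mass W X Y \<alpha> = mass W \<alpha> (Y - X)"
      by (simp add: crossing_mass_def)
    then have "\<forall>v\<in>Y - X. push_to a W X Y \<alpha> v = 0"
      using drained[of _ "Y - X"] a by (auto simp: push_to_def)
    then show ?thesis ..
  qed
qed

lemma push_to_eq_self:
  assumes "\<alpha> \<in> simplex_pts \<sigma>" "\<sigma> \<subseteq> X \<or> \<sigma> \<subseteq> Y"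
  shows "push_to a W X Y \<alpha> = \<alpha>"
  using crossing_mass_eq_0[OF assms] by (simp add: push_to_def drain_def fun_eq_iff)

lemma continuous_map_push_to:
  assumes g: "continuous_map T (powertop_real UNIV) g" and "finite W"
    and W: "\<And>p. p \<in> topspace T \<Longrightarrow> g p \<in> simplex_pts W"
  shows "continuous_map T (powertop_real UNIV) (\<lambda>p. push_to a W X Y (g p))"
proof -
  have coord: "continuous_map T euclideanreal (\<lambda>p. g p v)" for v
    using g unfolding continuous_map_componentwise_UNIV by blast
  have mass: "continuous_map T euclideanreal (\<lambda>p. mass W (g p) P)" for P
    unfolding mass_def using coord \<open>finite W\<close> by (intro continuous_map_sum) auto
  have m: "continuous_map T euclideanreal (\<lambda>p. crossing_mass W X Y (g p))"
    unfolding crossing_mass_def using mass by (intro continuous_map_real_min)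
  have drain: "continuous_map T euclideanreal (\<lambda>p. drain W (crossing_mass W X Y (g p)) (g p) P v)"
    if "P = X - Y \<or> P = Y - X" for P v
  proof (cases "v \<in> P")
    case True
    have "continuous_map T euclideanreal
        (\<lambda>p. g p v * (crossing_mass W X Y (g p) / mass W (g p) P))"
    proof (rule continuous_map_mult_ratio[OF coord mass m])
      fix p assume "p \<in> topspace T"
      then have gW: "g p \<in> simplex_pts W" by (rule W)
      show "0 \<le> g p v \<and> g p v \<le> mass W (g p) P \<and>
          0 \<le> crossing_mass W X Y (g p) \<and> crossing_mass W X Y (g p) \<le> mass W (g p) P"
        using simplex_pts_nonneg[OF gW] coord_le_mass[OF gW order_refl \<open>finite W\<close> True]
          crossing_mass_bounds[OF gW] that by auto
    qed
    then show ?thesis using True by (simp add: drain_def)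
  qed (simp add: drain_def)
  have transfer: "continuous_map T euclideanreal (\<lambda>p. if v = a then 2 * crossing_mass W X Y (g p) else 0)"
    for v
    using continuous_map_real_mult_left[OF m] by (cases "v = a") simp_all
  show ?thesis
    unfolding continuous_map_componentwise_UNIV push_to_def
    by (intro allI continuous_map_add continuous_map_diff coord drain transfer) simp_all
qed

section \<open>Vietoris-Rips complexes of a separated cover\<close>

lemma abstract_simplicial_complex_VR: "abstract_simplicial_complex (VR d r B)"
  unfolding abstract_simplicial_complex_def VR_def by (auto intro: finite_subset)

lemma VR_mono: "B \<subseteq> B' \<Longrightarrow> VR d r B \<subseteq> VR d r B'"
  unfolding VR_def by auto

lemma VR_face: "\<sigma> \<in> VR d r B \<Longrightarrow> \<tau> \<subseteq> \<sigma> \<Longrightarrow> \<tau> \<noteq> {} \<Longrightarrow> \<tau> \<subseteq> B' \<Longrightarrow> \<tau> \<in> VR d r B'"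
  unfolding VR_def by (simp add: finite_subset subset_iff)

locale separated_cover =
  fixes d :: "'a \<Rightarrow> 'a \<Rightarrow> ennreal" and X Y :: "'a set"
  assumes distance: "distance_on (X \<union> Y) d"
    and crossing_dominates: "\<And>x y v. x \<in> X - Y \<Longrightarrow> y \<in> Y - X \<Longrightarrow> v \<in> X \<inter> Y \<Longrightarrow>
      d x v \<le> d x y \<and> d y v \<le> d x y"
    and crossing_ge_diam: "\<And>x y. x \<in> X - Y \<Longrightarrow> y \<in> Y - X \<Longrightarrow> ddiam d (X \<inter> Y) \<le> d x y"
begin

lemma VR_one_sided_or_insert:
  assumes \<sigma>: "\<sigma> \<in> VR d r (X \<union> Y)" and a: "a \<in> X \<inter> Y"
  shows "\<sigma> \<subseteq> X \<or> \<sigma> \<subseteq> Y \<or> insert a \<sigma> \<in> VR d r (X \<union> Y)"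
proof -
  have \<sigma>_sub: "\<sigma> \<subseteq> X \<union> Y" and small: "\<And>u w. u \<in> \<sigma> \<Longrightarrow> w \<in> \<sigma> \<Longrightarrow> d u w \<le> ennreal r"
    using \<sigma> unfolding VR_def by auto
  show ?thesis
  proof (cases "\<sigma> \<subseteq> X \<or> \<sigma> \<subseteq> Y")
    case False
    then obtain x y where x: "x \<in> \<sigma>" "x \<in> X - Y" and y: "y \<in> \<sigma>" "y \<in> Y - X"
      using \<sigma>_sub by blast
    have "d u a \<le> ennreal r" if u: "u \<in> \<sigma>" for u
    proof -
      consider "u \<in> X - Y" | "u \<in> Y - X" | "u \<in> X \<inter> Y" using u \<sigma>_sub by blast
      then have "d u a \<le> d u y \<or> d u a \<le> d x u \<or> d u a \<le> d x y"
      proof cases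
        case 3
        then have "d u a \<le> ddiam d (X \<inter> Y)"
          unfolding ddiam_def using a by (intro Sup_upper) blast
        then show ?thesis using crossing_ge_diam[OF x(2) y(2)] by (meson order_trans)
      qed (use crossing_dominates x y a in auto)
      then show ?thesis
        using small u x(1) y(1) by (meson order_trans)
    qed
    moreover have "d a u = d u a" if "u \<in> \<sigma>" for u
      using distance a that \<sigma>_sub unfolding distance_on_def by blast
    moreover have "d a a = 0"
      using distance a unfolding distance_on_def by blast
    ultimately have "insert a \<sigma> \<in> VR d r (X \<union> Y)"
      using \<sigma> a unfolding VR_def by auto
    then show ?thesis by blast
  qed blast
qed

lemma push_to_in_VR_side:
  assumes \<sigma>: "\<sigma> \<in> VR d r (X \<union> Y)" "\<sigma> \<subseteq> W" and \<alpha>: "\<alpha> \<in> simplex_pts \<sigma>"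
    and W: "finite W" "a \<in> W" and a: "a \<in> X \<inter> Y"
  shows "\<exists>\<tau>\<in>VR d r X \<union> VR d r Y. \<tau> \<subseteq> W \<and> push_to a W X Y \<alpha> \<in> simplex_pts \<tau>"
proof -
  consider "\<sigma> \<subseteq> X \<or> \<sigma> \<subseteq> Y" | "insert a \<sigma> \<in> VR d r (X \<union> Y)"
    using VR_one_sided_or_insert[OF \<sigma>(1) a] by blast
  then show ?thesis
  proof cases
    case 1
    then have "\<sigma> \<in> VR d r X \<union> VR d r Y"
      using VR_face[OF \<sigma>(1) order_refl simplex_pts_nonempty[OF \<alpha>]] by blast
    then show ?thesis
      using push_to_eq_self[OF \<alpha> 1] \<sigma>(2) \<alpha> by auto
  next
    case 2
    let ?\<tau> = "insert a \<sigma>"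
    have \<tau>: "finite ?\<tau>" "?\<tau> \<subseteq> X \<union> Y" "?\<tau> \<subseteq> W"
      using 2 \<sigma>(2) W unfolding VR_def by auto
    have push: "push_to a W X Y \<alpha> \<in> simplex_pts ?\<tau>"
      using push_to_in_simplex[OF \<alpha> \<sigma>(2) W(1) a] .
    have "?\<tau> \<inter> Y \<in> VR d r Y" "?\<tau> \<inter> X \<in> VR d r X"
      using a by (auto intro!: VR_face[OF 2])
    moreover consider "\<forall>v\<in>X - Y. push_to a W X Y \<alpha> v = 0" | "\<forall>v\<in>Y - X. push_to a W X Y \<alpha> v = 0"
      using push_to_vanishes_on_a_side[OF \<alpha> \<sigma>(2) W(1) a] by blast
    then have "push_to a W X Y \<alpha> \<in> simplex_pts (?\<tau> \<inter> Y) \<or> push_to a W X Y \<alpha> \<in> simplex_pts (?\<tau> \<inter> X)"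
    proof cases
      case 1
      then have "push_to a W X Y \<alpha> \<in> simplex_pts (?\<tau> \<inter> Y)"
        using \<tau>(2) by (intro simplex_pts_restrict[OF push \<tau>(1)]) blast
      then show ?thesis ..
    next
      case 2
      then have "push_to a W X Y \<alpha> \<in> simplex_pts (?\<tau> \<inter> X)"
        using \<tau>(2) by (intro simplex_pts_restrict[OF push \<tau>(1)]) blast
      then show ?thesis ..
    qed
    ultimately show ?thesis
      using \<tau>(3) by blast
  qed
qed

lemma push_to_segment_in_VR:
  assumes \<sigma>: "\<sigma> \<in> VR d r (X \<union> Y)" "\<sigma> \<subseteq> W" and \<alpha>: "\<alpha> \<in> simplex_pts \<sigma>"
    and W: "finite W" "a \<in> W" and a: "a \<in> X \<inter> Y" and t: "t \<in> {0..1}"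
  shows "\<exists>\<tau>\<in>VR d r (X \<union> Y). \<tau> \<subseteq> W \<and> (\<lambda>v. (1 - t) * \<alpha> v + t * push_to a W X Y \<alpha> v) \<in> simplex_pts \<tau>"
proof -
  consider "\<sigma> \<subseteq> X \<or> \<sigma> \<subseteq> Y" | "insert a \<sigma> \<in> VR d r (X \<union> Y)"
    using VR_one_sided_or_insert[OF \<sigma>(1) a] by blast
  then show ?thesis
  proof cases
    case 1
    then show ?thesis
      using push_to_eq_self[OF \<alpha>] \<sigma> \<alpha> by (auto simp: algebra_simps)
  next
    case 2
    let ?\<tau> = "insert a \<sigma>"
    have "finite ?\<tau>"
      using \<sigma>(2) W(1) finite_subset by auto
    then have "(\<lambda>v. (1 - t) * \<alpha> v + t * push_to a W X Y \<alpha> v) \<in> simplex_pts ?\<tau>"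
      using simplex_pts_convex[OF simplex_pts_mono[OF \<alpha>] push_to_in_simplex[OF \<alpha> \<sigma>(2) W(1) a]] t
      by auto
    then show ?thesis
      using 2 \<sigma>(2) W(2) by blast
  qed
qed

lemma push_to_fixes_realization:
  assumes "\<alpha> \<in> geom_real_set (VR d r X \<union> VR d r Y)"
  shows "push_to a W X Y \<alpha> = \<alpha>"
proof -
  obtain \<sigma> where "\<sigma> \<in> VR d r X \<union> VR d r Y" "\<alpha> \<in> simplex_pts \<sigma>"
    using assms unfolding geom_real_set_def by blast
  moreover from this(1) have "\<sigma> \<subseteq> X \<or> \<sigma> \<subseteq> Y"
    unfolding VR_def by blast
  ultimately show ?thesis
    by (blast intro: push_to_eq_self)
qed

lemma continuous_map_push_to_VR_side:
  assumes f: "continuous_map T (powertop_real UNIV) f" and W: "finite W" "a \<in> W" and a: "a \<in> X \<inter> Y"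
    and f_simplex: "\<And>p. p \<in> topspace T \<Longrightarrow> \<exists>\<sigma>\<in>VR d r (X \<union> Y). \<sigma> \<subseteq> W \<and> f p \<in> simplex_pts \<sigma>"
  shows "continuous_map T (geom_real (VR d r X \<union> VR d r Y)) (\<lambda>p. push_to a W X Y (f p))"
proof (rule continuous_map_into_geom_real[OF continuous_map_push_to[OF f W(1)] W(1)])
  fix p assume "p \<in> topspace T"
  then obtain \<sigma> where "\<sigma> \<in> VR d r (X \<union> Y)" "\<sigma> \<subseteq> W" "f p \<in> simplex_pts \<sigma>"
    using f_simplex by blast
  then show "f p \<in> simplex_pts W"
    and "\<exists>\<tau>\<in>VR d r X \<union> VR d r Y. \<tau> \<subseteq> W \<and> push_to a W X Y (f p) \<in> simplex_pts \<tau>"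
    using simplex_pts_mono W(1) push_to_in_VR_side[OF _ _ _ W a] by blast+
qed

lemma continuous_map_push_to_segment_VR:
  assumes f: "continuous_map T (powertop_real UNIV) f" and W: "finite W" "a \<in> W" and a: "a \<in> X \<inter> Y"
    and f_simplex: "\<And>p. p \<in> topspace T \<Longrightarrow> \<exists>\<sigma>\<in>VR d r (X \<union> Y). \<sigma> \<subseteq> W \<and> f p \<in> simplex_pts \<sigma>"
  shows "continuous_map (prod_topology (top_of_set {0..1::real}) T) (geom_real (VR d r (X \<union> Y)))
    (\<lambda>(t, p). \<lambda>v. (1 - t) * f p v + t * push_to a W X Y (f p) v)"
proof -
  have "continuous_map T (powertop_real UNIV) (\<lambda>p. push_to a W X Y (f p))"
    using f_simplex simplex_pts_mono[OF _ _ W(1)]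
    by (intro continuous_map_push_to[OF f W(1)]) blast
  then show ?thesis
  proof (rule continuous_map_into_geom_real[OF continuous_map_linear_homotopy[OF f] W(1)])
    fix z assume "z \<in> topspace (prod_topology (top_of_set {0..1::real}) T)"
    then obtain t p where z: "z = (t, p)" "t \<in> {0..1}" "p \<in> topspace T"
      by (cases z) (simp add: topspace_prod_topology)
    then obtain \<sigma> where "\<sigma> \<in> VR d r (X \<union> Y)" "\<sigma> \<subseteq> W" "f p \<in> simplex_pts \<sigma>"
      using f_simplex by blast
    then show "\<exists>\<tau>\<in>VR d r (X \<union> Y). \<tau> \<subseteq> W \<and>
        (case z of (t, p) \<Rightarrow> \<lambda>v. (1 - t) * f p v + t * push_to a W X Y (f p) v) \<in> simplex_pts \<tau>"
      using push_to_segment_in_VR[OF _ _ _ W a] z by simp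
  qed
qed

lemma deforms_compacta_VR:
  assumes a: "a \<in> X \<inter> Y"
  shows "deforms_compacta_into (geom_real (VR d r X \<union> VR d r Y)) (geom_real (VR d r (X \<union> Y)))"
  unfolding deforms_compacta_into_def
proof (intro allI impI)
  let ?K = "VR d r (X \<union> Y)"
  fix C assume C: "compactin (geom_real ?K) C"
  let ?C = "subtopology (geom_real ?K) C"
  obtain W0 where "finite W0" and W0: "\<And>\<alpha>. \<alpha> \<in> C \<Longrightarrow> \<exists>\<sigma>\<in>?K. \<sigma> \<subseteq> W0 \<and> \<alpha> \<in> simplex_pts \<sigma>"
    using compactin_geom_real_finite_vertices[OF C abstract_simplicial_complex_VR] by blast
  define W where "W = insert a W0"
  have W: "finite W" "a \<in> W"
    using \<open>finite W0\<close> by (auto simp: W_def)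
  have in_simplex: "\<exists>\<sigma>\<in>?K. \<sigma> \<subseteq> W \<and> \<alpha> \<in> simplex_pts \<sigma>" if "\<alpha> \<in> topspace ?C" for \<alpha>
    using W0[of \<alpha>] that unfolding W_def by auto
  have incl: "continuous_map ?C (powertop_real UNIV) (\<lambda>\<alpha>. \<alpha>)"
    using continuous_map_geom_real_imp_powertop[OF continuous_map_id_subt] by (simp add: id_def)
  define D where "D = (\<lambda>(t, \<alpha>). \<lambda>v. (1 - t) * \<alpha> v + t * push_to a W X Y \<alpha> v)"
  have "continuous_map (prod_topology (top_of_set {0..1::real}) ?C) (geom_real ?K) D"
    using continuous_map_push_to_segment_VR[OF incl W a in_simplex] unfolding D_def .
  moreover have "continuous_map ?C (geom_real (VR d r X \<union> VR d r Y)) (\<lambda>\<alpha>. D (1, \<alpha>))"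
    using continuous_map_push_to_VR_side[OF incl W a in_simplex] by (simp add: D_def)
  moreover have "D (t, \<alpha>) = \<alpha>" if "\<alpha> \<in> topspace (geom_real (VR d r X \<union> VR d r Y))" for t \<alpha>
    using push_to_fixes_realization that by (simp add: D_def topspace_geom_real algebra_simps)
  moreover have "D (0, \<alpha>) = \<alpha>" for \<alpha>
    by (simp add: D_def)
  ultimately show "\<exists>D. continuous_map (prod_topology (top_of_set {0..1::real}) ?C) (geom_real ?K) D \<and>
      (\<forall>z\<in>C. D (0, z) = z) \<and> continuous_map ?C (geom_real (VR d r X \<union> VR d r Y)) (\<lambda>z. D (1, z)) \<and>
      (\<forall>t\<in>{0..1}. \<forall>z\<in>C \<inter> topspace (geom_real (VR d r X \<union> VR d r Y)). D (t, z) = z)"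
    by blast
qed

end

theorem proposition10p7:
  fixes d :: "'a \<Rightarrow> 'a \<Rightarrow> ennreal" and Z X Y :: "'a set"
  assumes "distance_on Z d"
    and "X \<union> Y = Z"
    and "X \<inter> Y \<noteq> {}"
    and "\<forall>x\<in>X - (X \<inter> Y). \<forall>y\<in>Y - (X \<inter> Y). \<forall>v\<in>X \<inter> Y. d x y \<ge> d x v \<and> d x y \<ge> d y v"
    and "\<forall>x\<in>X - (X \<inter> Y). \<forall>y\<in>Y - (X \<inter> Y). d x y \<ge> ddiam d (X \<inter> Y)"
  shows "\<forall>r::real. 0 \<le> r \<longrightarrow>
           weak_equivalence (geom_real (VR d r X \<union> VR d r Y)) (geom_real (VR d r Z)) id"
proof (intro allI impI)
  fix r :: real
  have "X - (X \<inter> Y) = X - Y" "Y - (X \<inter> Y) = Y - X" by auto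
  then interpret separated_cover d X Y
    using assms(1,2,4,5) by unfold_locales simp_all
  obtain a where a: "a \<in> X \<inter> Y"
    using assms(3) by blast
  have "VR d r X \<union> VR d r Y \<subseteq> VR d r (X \<union> Y)"
    using VR_mono[of X "X \<union> Y"] VR_mono[of Y "X \<union> Y"] by blast
  then show "weak_equivalence (geom_real (VR d r X \<union> VR d r Y)) (geom_real (VR d r Z)) id"
    unfolding assms(2)[symmetric]
    by (intro weak_equivalence_id_if_deforms_compacta continuous_map_geom_real_subcomplex
        deforms_compacta_VR[OF a])
qed

end
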